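(* Let $\mathcal{REP}$ be the category of finite-dimensional modules over $\Bbbk[x_1,x_2]$. Then $\mathrm{fpdim}(\mathcal{REP})=2$.
   Context: $\Bbbk$ is algebraically closed. For a $\Bbbk$-linear abelian category $\mathcal C$: a brick is an object $M$ with $\mathrm{Hom}_{\mathcal C}(M,M)=\Bbbk$; a brick set is a finite set $\phi=\{X_1,\dots,X_n\}$ of bricks with $\dim\mathrm{Hom}_{\mathcal C}(X_i,X_j)=\delta_{ij}$; its adjacency matrix is $C(\phi)=(\dim\mathrm{Ext}^1_{\mathcal C}(X_i,X_j))_{i,j}$; $\mathrm{fpdim}(\mathcal C)=\sup\{\rho(C(\phi)):\phi\text{ a brick set}\}$, $\rho$ the spectral radius. *)

theory Defs
  imports "Jordan_Normal_Form.Spectral_Radius" "Jordan_Normal_Form.VS_Connect"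
    "HOL-Computational_Algebra.Polynomial" "HOL-Library.Extended_Real"
begin

text \<open>A finite-dimensional module over k[x1,x2] is (up to isomorphism) a triple
  (n, A, B): a k-vector space k^n with two commuting n x n matrices A, B giving the
  actions of x1 and x2. Every object of REP is isomorphic to one of these, and all
  notions below are isomorphism invariant.\<close>

type_synonym 'k rep = "nat \<times> 'k mat \<times> 'k mat"

definition rep_dim :: "'k rep \<Rightarrow> nat" where "rep_dim M = fst M"
definition act1 :: "'k rep \<Rightarrow> 'k mat" where "act1 M = fst (snd M)"
definition act2 :: "'k rep \<Rightarrow> 'k mat" where "act2 M = snd (snd M)"

definition is_rep :: "'k::field rep \<Rightarrow> bool" where
  "is_rep M \<longleftrightarrow> act1 M \<in> carrier_mat (rep_dim M) (rep_dim M)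
     \<and> act2 M \<in> carrier_mat (rep_dim M) (rep_dim M)
     \<and> act1 M * act2 M = act2 M * act1 M"

definition mdim :: "'k::field itself \<Rightarrow> nat \<Rightarrow> nat \<Rightarrow> 'k mat set \<Rightarrow> nat" where
  "mdim ty r c S = vectorspace.dim class_ring ((module_mat ty r c)\<lparr>carrier := S\<rparr>)"

definition Hom_rep :: "'k::field rep \<Rightarrow> 'k rep \<Rightarrow> 'k mat set" where
  "Hom_rep M N = {F \<in> carrier_mat (rep_dim N) (rep_dim M).
      act1 N * F = F * act1 M \<and> act2 N * F = F * act2 M}"

definition dim_Hom :: "'k::field rep \<Rightarrow> 'k rep \<Rightarrow> nat" where
  "dim_Hom M N = mdim TYPE('k) (rep_dim N) (rep_dim M) (Hom_rep M N)"

text \<open>A pair (G,H) of (dim N x dim M)-matrices, encoded as the block row [G H].\<close>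
definition hpair :: "'k::field mat \<Rightarrow> 'k mat \<Rightarrow> 'k mat" where
  "hpair G H = four_block_mat G H (0\<^sub>m 0 (dim_col G)) (0\<^sub>m 0 (dim_col H))"

text \<open>Ext^1(M,N) = classes of extensions 0 -> N -> E -> M -> 0. Such E may be taken on
  k^(dim N) (+) k^(dim M) with x1, x2 acting by [[A_N, G],[0, A_M]] and [[B_N, H],[0, B_M]];
  these commute iff (G,H) is a cocycle. Two such extensions are equivalent iff the
  cocycles differ by a coboundary (A_N F - F A_M, B_N F - F B_M).\<close>
definition Ext1_cocycles :: "'k::field rep \<Rightarrow> 'k rep \<Rightarrow> 'k mat set" where
  "Ext1_cocycles M N = {hpair G H | G H.
      G \<in> carrier_mat (rep_dim N) (rep_dim M) \<and> H \<in> carrier_mat (rep_dim N) (rep_dim M) \<and>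
      act1 N * H + G * act2 M = act2 N * G + H * act1 M}"

definition Ext1_coboundaries :: "'k::field rep \<Rightarrow> 'k rep \<Rightarrow> 'k mat set" where
  "Ext1_coboundaries M N = {hpair (act1 N * F - F * act1 M) (act2 N * F - F * act2 M) | F.
      F \<in> carrier_mat (rep_dim N) (rep_dim M)}"

definition dim_Ext1 :: "'k::field rep \<Rightarrow> 'k rep \<Rightarrow> nat" where
  "dim_Ext1 M N =
     mdim TYPE('k) (rep_dim N) (rep_dim M + rep_dim M) (Ext1_cocycles M N)
     - mdim TYPE('k) (rep_dim N) (rep_dim M + rep_dim M) (Ext1_coboundaries M N)"

definition is_brick :: "'k::field rep \<Rightarrow> bool" where
  "is_brick M \<longleftrightarrow> is_rep M \<and> dim_Hom M M = 1"

definition brick_set :: "'k::field rep list \<Rightarrow> bool" where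
  "brick_set xs \<longleftrightarrow> xs \<noteq> [] \<and> (\<forall>i<length xs. is_brick (xs ! i))
     \<and> (\<forall>i<length xs. \<forall>j<length xs. dim_Hom (xs ! i) (xs ! j) = (if i = j then 1 else 0))"

definition adjacency :: "'k::field rep list \<Rightarrow> complex mat" where
  "adjacency xs = mat (length xs) (length xs)
      (\<lambda>(i,j). of_nat (dim_Ext1 (xs ! i) (xs ! j)))"

definition fpdim_REP :: "'k::field itself \<Rightarrow> ereal" where
  "fpdim_REP ty = (SUP xs \<in> {xs :: 'k rep list. brick_set xs}. ereal (spectral_radius (adjacency xs)))"

end

theory Submission
  imports Defs
begin

text \<open>
  A brick \<open>M\<close> over any field is one-dimensional: the actions
  of \<open>x\<^sub>1\<close> and \<open>x\<^sub>2\<close> are endomorphisms of \<open>M\<close>, hence scalars, so every matrix commutes with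
  them and \<open>(dim M)\<^sup>2 = dim End(M) = 1\<close>. Bricks are therefore the modules
  \<open>S(a, b) = k[x\<^sub>1, x\<^sub>2] / (x\<^sub>1 - a, x\<^sub>2 - b)\<close>, and the entries of a brick set are pairwise
  distinct since \<open>Hom(X\<^sub>i, X\<^sub>j) = 0 \<noteq> Hom(X\<^sub>i, X\<^sub>i)\<close>. Solving the cocycle condition directly,
  \<open>Ext\<^sup>1(S(a, b), S(a, b))\<close> is 2-dimensional (every pair is a cocycle, only zero is a coboundary)
  and \<open>Ext\<^sup>1(S(a, b), S(c, d)) = 0\<close> for \<open>(a, b) \<noteq> (c, d)\<close>. Hence the adjacency matrix of every
  brick set is \<open>2 I\<close>, whose spectral radius is 2.
\<close>

section \<open>Dimensions of spaces of matrices\<close>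

definition mat_of_vec :: "nat \<Rightarrow> nat \<Rightarrow> 'a vec \<Rightarrow> 'a mat" where
  "mat_of_vec r c v = mat r c (\<lambda>(i, j). v $ (i * c + j))"

lemma row_major_index_less:
  fixes i j r c :: nat
  assumes "i < r" "j < c"
  shows "i * c + j < r * c"
proof -
  have "i * c + j < (i + 1) * c" using assms(2) by simp
  also have "\<dots> \<le> r * c" using assms(1) by (intro mult_right_mono) auto
  finally show ?thesis .
qed

lemma row_major_div_mod_less:
  fixes k r c :: nat
  assumes "k < r * c"
  shows "k div c < r" "k mod c < c"
proof -
  have "0 < c" using assms by (cases c) auto
  then show "k mod c < c" by simp
  show "k div c < r" using assms by (simp add: less_mult_imp_div_less)
qed

lemma linear_map_mat_of_vec:
  "linear_map class_ring (module_vec TYPE('a::field) (r * c)) (module_mat TYPE('a) r c) (mat_of_vec r c)"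
proof -
  interpret V: vectorspace "class_ring :: 'a ring" "module_vec TYPE('a) (r * c)" by (rule vec_vs)
  interpret M: vectorspace "class_ring :: 'a ring" "module_mat TYPE('a) r c" by (rule matrix_vs)
  show ?thesis
    by unfold_locales
      (auto simp: module_hom_def mat_of_vec_def module_mat_simps module_vec_simps row_major_index_less)
qed

lemma mat_of_vec_bij_betw: "bij_betw (mat_of_vec r c) (carrier_vec (r * c)) (carrier_mat r c)"
proof (rule bij_betwI)
  let ?vec_of_mat = "\<lambda>M. vec (r * c) (\<lambda>k. M $$ (k div c, k mod c))"
  show "?vec_of_mat \<in> carrier_mat r c \<rightarrow> carrier_vec (r * c)" by simp
  show "mat_of_vec r c \<in> carrier_vec (r * c) \<rightarrow> carrier_mat r c" by (simp add: mat_of_vec_def)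
  show "?vec_of_mat (mat_of_vec r c v) = v" if "v \<in> carrier_vec (r * c)" for v
    using that by (auto simp: mat_of_vec_def row_major_div_mod_less)
  show "mat_of_vec r c (?vec_of_mat M) = M" if "M \<in> carrier_mat r c" for M
    using that by (auto simp: mat_of_vec_def row_major_index_less)
qed

lemma fin_dim_module_mat: "vectorspace.fin_dim class_ring (module_mat TYPE('a::field) r c)"
proof -
  interpret linear_map "class_ring :: 'a ring" "module_vec TYPE('a) (r * c)"
    "module_mat TYPE('a) r c" "mat_of_vec r c"
    by (rule linear_map_mat_of_vec)
  have "mat_of_vec r c ` carrier (module_vec TYPE('a) (r * c)) = carrier (module_mat TYPE('a) r c)"
    unfolding module_mat_simps module_vec_simps by (rule bij_betw_imp_surj_on[OF mat_of_vec_bij_betw])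
  then show ?thesis by (rule surj_fin_dim[OF vec_space.fin_dim])
qed

lemma dim_module_mat: "vectorspace.dim class_ring (module_mat TYPE('a::field) r c) = r * c"
proof -
  interpret linear_map "class_ring :: 'a ring" "module_vec TYPE('a) (r * c)"
    "module_mat TYPE('a) r c" "mat_of_vec r c"
    by (rule linear_map_mat_of_vec)
  have "inj_on (mat_of_vec r c) (carrier (module_vec TYPE('a) (r * c)))"
    "mat_of_vec r c ` carrier (module_vec TYPE('a) (r * c)) = carrier (module_mat TYPE('a) r c)"
    unfolding module_mat_simps module_vec_simps
    by (rule bij_betw_imp_inj_on[OF mat_of_vec_bij_betw] bij_betw_imp_surj_on[OF mat_of_vec_bij_betw])+
  from dim_eq[OF vec_space.fin_dim this] show ?thesis by (simp add: vec_space.dim_is_n)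
qed

lemma (in module) span_singleton:
  assumes "v \<in> carrier M"
  shows "span {v} = {a \<odot>\<^bsub>M\<^esub> v | a. a \<in> carrier R}"
proof -
  have "\<exists>c. a \<odot>\<^bsub>M\<^esub> v = (\<Oplus>\<^bsub>M\<^esub>w\<in>{v}. c w \<odot>\<^bsub>M\<^esub> w) \<and> c v \<in> carrier R"
    if "a \<in> carrier R" for a
    using assms that by (intro exI[of _ "\<lambda>_. a"]) simp
  then show ?thesis using assms by (auto simp: finite_span lincomb_def Pi_def)
qed

lemma (in vectorspace) dim_eq_1_imp_carrier_eq_multiples:
  assumes "fin_dim" "dim = 1" "v \<in> carrier V" "v \<noteq> \<zero>\<^bsub>V\<^esub>"
  shows "carrier V = {a \<odot>\<^bsub>V\<^esub> v | a. a \<in> carrier K}"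
proof -
  have "lin_indpt {v}"
    using lin_dep_iff_in_span[of "{}" v] assms(3,4) by (simp add: span_empty finite_lin_indpt2)
  then have "basis {v}" using assms(1-3) by (intro dim_li_is_basis) auto
  then show ?thesis using span_singleton[OF assms(3)] by (simp add: basis_def)
qed

lemma (in vectorspace) fin_dim_subspace:
  assumes "fin_dim" "subspace K S V"
  shows "vectorspace.fin_dim K (vs S)"
proof -
  interpret S: vectorspace K "vs S" by (rule subspace_is_vs[OF assms(2)])
  have S_sub: "submodule K S V" using assms(2) by (simp add: subspace_def)
  have li_iff: "S.lin_indpt A \<longleftrightarrow> lin_indpt A" if "A \<subseteq> S" for A
    using span_li_not_depend(2)[OF that S_sub] by simp
  have "S \<subseteq> carrier V" using S_sub by (simp add: submodule_def)
  then have bound: "finite A \<and> card A \<le> dim" if "A \<subseteq> S \<and> S.lin_indpt A" for A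
    using that li_iff li_le_dim[OF assms(1)] by blast
  obtain A where "finite A" "maximal A (\<lambda>A. A \<subseteq> carrier (vs S) \<and> S.lin_indpt A)"
    using maximal_exists[of "\<lambda>A. A \<subseteq> carrier (vs S) \<and> S.lin_indpt A" dim "{}"] bound
    by (auto simp: S.finite_lin_indpt2)
  then show ?thesis
    unfolding S.fin_dim_def using S.max_li_is_gen by (auto simp: maximal_def)
qed

lemma mdim_carrier_mat: "mdim TYPE('a::field) r c (carrier_mat r c) = r * c"
proof -
  have "(module_mat TYPE('a) r c)\<lparr>carrier := carrier_mat r c\<rparr> = module_mat TYPE('a) r c"
    by (simp add: module_mat_def)
  then show ?thesis by (simp add: mdim_def dim_module_mat)
qed

lemma mdim_zero: "mdim TYPE('a::field) r c {0\<^sub>m r c} = 0"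
proof -
  interpret M: matrix_vs r c "TYPE('a)" .
  have sub: "subspace class_ring {0\<^sub>m r c} M.V"
    using M.span_is_subspace[of "{}"] by (simp add: M.span_empty)
  interpret Z: vectorspace class_ring "M.vs {0\<^sub>m r c}" by (rule M.subspace_is_vs[OF sub])
  have "Z.span {0\<^sub>m r c} = M.span {0\<^sub>m r c}"
    using sub by (intro M.span_li_not_depend(1)) (auto simp: subspace_def)
  also have "\<dots> = {0\<^sub>m r c}" by (auto simp: M.span_singleton)
  finally show ?thesis unfolding mdim_def by (intro Z.dim0I) (simp add: module_mat_simps)
qed

lemma mdim_eq_1_imp_multiples:
  assumes S: "subspace class_ring S (module_mat TYPE('a::field) r c)"
    and dim: "mdim TYPE('a) r c S = 1" and w: "w \<in> S" "w \<noteq> 0\<^sub>m r c"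
  shows "S = {a \<cdot>\<^sub>m w | a. True}"
proof -
  interpret M: matrix_vs r c "TYPE('a)" .
  interpret Sv: vectorspace class_ring "M.vs S" by (rule M.subspace_is_vs[OF S])
  \<comment> \<open>\<open>mdim\<close> is a \<open>LEAST\<close> over finite generating sets and means nothing without this.\<close>
  have "Sv.fin_dim" by (rule M.fin_dim_subspace[OF fin_dim_module_mat S])
  from Sv.dim_eq_1_imp_carrier_eq_multiples[OF this] dim w show ?thesis
    by (simp add: mdim_def module_mat_simps)
qed

section \<open>Scalar matrices\<close>

lemma smult_one_mat_commute:
  fixes F :: "'a::comm_semiring_1 mat"
  assumes F: "F \<in> carrier_mat n n"
  shows "(a \<cdot>\<^sub>m 1\<^sub>m n) * F = F * (a \<cdot>\<^sub>m 1\<^sub>m n)"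
  using mult_smult_assoc_mat[OF one_carrier_mat F] mult_smult_distrib[OF F one_carrier_mat] F
  by simp

lemma smult_one_mat_mult:
  "(a \<cdot>\<^sub>m 1\<^sub>m n) * (b \<cdot>\<^sub>m 1\<^sub>m n) = (a * b :: 'a::comm_semiring_1) \<cdot>\<^sub>m 1\<^sub>m n"
proof -
  have "(a \<cdot>\<^sub>m 1\<^sub>m n) * (b \<cdot>\<^sub>m 1\<^sub>m n) = a \<cdot>\<^sub>m (1\<^sub>m n * (b \<cdot>\<^sub>m 1\<^sub>m n))"
    by (rule mult_smult_assoc_mat) auto
  then show ?thesis by (auto simp: mat_eq_iff)
qed

lemma smult_one_mat_add: "a \<cdot>\<^sub>m 1\<^sub>m n + b \<cdot>\<^sub>m 1\<^sub>m n = (a + b :: 'a::semiring_1) \<cdot>\<^sub>m 1\<^sub>m n"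
  by (auto simp: algebra_simps)

lemma smult_one_mat_diff: "a \<cdot>\<^sub>m 1\<^sub>m n - b \<cdot>\<^sub>m 1\<^sub>m n = (a - b :: 'a::ring_1) \<cdot>\<^sub>m 1\<^sub>m n"
  by (auto simp: algebra_simps)

lemma smult_one_mat_inject: "0 < n \<Longrightarrow> a \<cdot>\<^sub>m 1\<^sub>m n = b \<cdot>\<^sub>m 1\<^sub>m n \<longleftrightarrow> (a = (b :: 'a::semiring_1))"
  by (auto simp: mat_eq_iff)

lemma ex_carrier_mat_1_1: "(\<exists>G \<in> carrier_mat 1 1. P G) \<longleftrightarrow> (\<exists>g :: 'a::semiring_1. P (g \<cdot>\<^sub>m 1\<^sub>m 1))"
proof
  assume "\<exists>G \<in> carrier_mat 1 1. P G"
  then obtain G where G: "G \<in> carrier_mat 1 1" "P G" by blast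
  then have "G = G $$ (0, 0) \<cdot>\<^sub>m 1\<^sub>m 1" by (auto intro!: eq_matI)
  with G show "\<exists>g. P (g \<cdot>\<^sub>m 1\<^sub>m 1)" by metis
qed auto

lemma smult_one_mat_mult_vec:
  assumes "v \<in> carrier_vec n"
  shows "(c \<cdot>\<^sub>m 1\<^sub>m n) *\<^sub>v v = c \<cdot>\<^sub>v (v :: 'a::comm_semiring_1 vec)"
  using assms by (intro eq_vecI)
    (auto simp: scalar_prod_def if_distrib[of "\<lambda>x. c * x"] if_distrib[of "\<lambda>x. x * v $ _"] sum.delta
      cong: if_cong)

lemma spectrum_smult_one_mat:
  assumes "0 < n"
  shows "spectrum (c \<cdot>\<^sub>m 1\<^sub>m n) = {c :: 'a::field}"
proof -
  have "eigenvector (c \<cdot>\<^sub>m 1\<^sub>m n) v k \<longleftrightarrow> v \<in> carrier_vec n \<and> v \<noteq> 0\<^sub>v n \<and> k = c" for v k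
  proof -
    have "c \<cdot>\<^sub>v v = k \<cdot>\<^sub>v v \<longleftrightarrow> k = c" if "v \<in> carrier_vec n" "v \<noteq> 0\<^sub>v n"
      using that by (auto simp: vec_eq_iff)
    then show ?thesis by (auto simp: eigenvector_def smult_one_mat_mult_vec)
  qed
  moreover have "\<exists>v. v \<in> carrier_vec n \<and> v \<noteq> (0\<^sub>v n :: 'a vec)"
    using assms by (intro exI[of _ "unit_vec n 0"]) (auto simp: vec_eq_iff)
  ultimately show ?thesis by (auto simp: spectrum_def eigenvalue_def)
qed

lemma spectral_radius_smult_one_mat: "0 < n \<Longrightarrow> spectral_radius (c \<cdot>\<^sub>m 1\<^sub>m n) = cmod c"
  by (simp add: spectral_radius_def spectrum_smult_one_mat)

section \<open>Bricks are one-dimensional\<close>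

lemma subspace_Hom_rep:
  assumes M: "is_rep M" and N: "is_rep N"
  shows "subspace class_ring (Hom_rep M N) (module_mat TYPE('k::field) (rep_dim N) (rep_dim M))"
proof -
  interpret V: vectorspace class_ring "module_mat TYPE('k) (rep_dim N) (rep_dim M)"
    by (rule matrix_vs)
  have "submodule class_ring (Hom_rep M N) (module_mat TYPE('k) (rep_dim N) (rep_dim M))"
  proof (unfold_locales, unfold module_mat_simps)
    show "Hom_rep M N \<subseteq> carrier_mat (rep_dim N) (rep_dim M)" by (auto simp: Hom_rep_def)
    show "0\<^sub>m (rep_dim N) (rep_dim M) \<in> Hom_rep M N"
      using M N by (auto simp: Hom_rep_def is_rep_def)
    show "F + G \<in> Hom_rep M N" if "F \<in> Hom_rep M N" "G \<in> Hom_rep M N" for F G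
      using that M N by (auto simp: Hom_rep_def is_rep_def mult_add_distrib_mat add_mult_distrib_mat)
    show "k \<cdot>\<^sub>m F \<in> Hom_rep M N" if "F \<in> Hom_rep M N" for k F
      using that M N by (auto simp: Hom_rep_def is_rep_def mult_smult_distrib mult_smult_assoc_mat)
  qed
  then show ?thesis by (simp add: subspace_def V.vectorspace_axioms)
qed

lemma Hom_rep_self_eq_carrier_mat:
  assumes "act1 M = a \<cdot>\<^sub>m 1\<^sub>m (rep_dim M)" "act2 M = b \<cdot>\<^sub>m 1\<^sub>m (rep_dim M)"
  shows "Hom_rep M M = carrier_mat (rep_dim M) (rep_dim M)"
  using assms by (auto simp: Hom_rep_def smult_one_mat_commute)

lemma brick_endomorphism_scalar:
  fixes M :: "'k::field rep"
  assumes M: "is_brick M" and F: "F \<in> Hom_rep M M"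
  shows "\<exists>a. F = a \<cdot>\<^sub>m 1\<^sub>m (rep_dim M)"
proof (cases "rep_dim M = 0")
  case True
  with F have "F \<in> carrier_mat 0 0" by (simp add: Hom_rep_def)
  with True show ?thesis by (intro exI[of _ 0] eq_matI) auto
next
  case False
  have rep: "is_rep M" and dim: "mdim TYPE('k) (rep_dim M) (rep_dim M) (Hom_rep M M) = 1"
    using M by (simp_all add: is_brick_def dim_Hom_def)
  have "1\<^sub>m (rep_dim M) \<in> Hom_rep M M" "1\<^sub>m (rep_dim M) \<noteq> (0\<^sub>m (rep_dim M) (rep_dim M) :: 'k mat)"
    using rep False by (auto simp: is_rep_def Hom_rep_def mat_eq_iff)
  from mdim_eq_1_imp_multiples[OF subspace_Hom_rep[OF rep rep] dim this] F show ?thesis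
    by blast
qed

definition simple_rep :: "'k::field \<Rightarrow> 'k \<Rightarrow> 'k rep" where
  "simple_rep a b = (1, a \<cdot>\<^sub>m 1\<^sub>m 1, b \<cdot>\<^sub>m 1\<^sub>m 1)"

lemma simple_rep_simps:
  "rep_dim (simple_rep a b) = 1" "act1 (simple_rep a b) = a \<cdot>\<^sub>m 1\<^sub>m 1" "act2 (simple_rep a b) = b \<cdot>\<^sub>m 1\<^sub>m 1"
  by (simp_all add: simple_rep_def rep_dim_def act1_def act2_def)

lemma is_brick_simple_rep: "is_brick (simple_rep a b)"
proof -
  have "(a \<cdot>\<^sub>m 1\<^sub>m 1) * (b \<cdot>\<^sub>m 1\<^sub>m 1) = (b \<cdot>\<^sub>m 1\<^sub>m 1) * (a \<cdot>\<^sub>m 1\<^sub>m (1::nat) :: 'a mat)"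
    by (rule smult_one_mat_commute) simp
  then have "is_rep (simple_rep a b)" by (simp add: is_rep_def simple_rep_simps)
  moreover have "Hom_rep (simple_rep a b) (simple_rep a b) = carrier_mat 1 1"
    using Hom_rep_self_eq_carrier_mat[of "simple_rep a b" a b] by (simp add: simple_rep_simps)
  ultimately show ?thesis
    by (simp add: is_brick_def dim_Hom_def mdim_carrier_mat simple_rep_simps)
qed

lemma brick_eq_simple_rep:
  assumes M: "is_brick M"
  obtains a b where "M = simple_rep a b"
proof -
  have "act1 M \<in> Hom_rep M M" "act2 M \<in> Hom_rep M M"
    using M by (auto simp: is_brick_def is_rep_def Hom_rep_def)
  then obtain a b where a: "act1 M = a \<cdot>\<^sub>m 1\<^sub>m (rep_dim M)" and b: "act2 M = b \<cdot>\<^sub>m 1\<^sub>m (rep_dim M)"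
    using brick_endomorphism_scalar[OF M] by meson
  have "rep_dim M * rep_dim M = 1"
    using M Hom_rep_self_eq_carrier_mat[OF a b] by (simp add: is_brick_def dim_Hom_def mdim_carrier_mat)
  then have "rep_dim M = 1" by simp
  with a b have "M = simple_rep a b"
    by (cases M) (simp add: simple_rep_def rep_dim_def act1_def act2_def)
  then show ?thesis by (rule that)
qed

section \<open>Extensions between one-dimensional modules\<close>

lemma common_factor_if_cross_eq:
  fixes a b g h :: "'a::field"
  assumes "a \<noteq> 0 \<or> b \<noteq> 0" "a * h = b * g"
  shows "\<exists>f. g = a * f \<and> h = b * f"
proof (cases "a = 0")
  case True
  with assms show ?thesis by (intro exI[of _ "h / b"]) auto
next
  case False
  with assms show ?thesis by (intro exI[of _ "g / a"]) (auto simp: field_simps)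
qed

lemma Ext1_cocycles_simple_rep:
  "Ext1_cocycles (simple_rep a b) (simple_rep c d) =
     {hpair (g \<cdot>\<^sub>m 1\<^sub>m 1) (h \<cdot>\<^sub>m 1\<^sub>m 1) | g h. (c - a) * h = (d - b) * g}"
proof -
  have cocycle_iff: "(c \<cdot>\<^sub>m 1\<^sub>m 1) * (h \<cdot>\<^sub>m 1\<^sub>m 1) + (g \<cdot>\<^sub>m 1\<^sub>m 1) * (b \<cdot>\<^sub>m 1\<^sub>m 1) =
      (d \<cdot>\<^sub>m 1\<^sub>m 1) * (g \<cdot>\<^sub>m 1\<^sub>m 1) + (h \<cdot>\<^sub>m 1\<^sub>m 1) * (a \<cdot>\<^sub>m 1\<^sub>m 1)
      \<longleftrightarrow> (c - a) * h = (d - b) * g" for g h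
  proof -
    have "c * h + g * b - (d * g + h * a) = (c - a) * h - (d - b) * g"
      by (simp add: algebra_simps)
    then show ?thesis
      unfolding smult_one_mat_mult smult_one_mat_add
      by (subst smult_one_mat_inject) (simp, metis eq_iff_diff_eq_0)
  qed
  have "X \<in> Ext1_cocycles (simple_rep a b) (simple_rep c d) \<longleftrightarrow>
      (\<exists>G \<in> carrier_mat 1 1. \<exists>H \<in> carrier_mat 1 1. X = hpair G H \<and>
         (c \<cdot>\<^sub>m 1\<^sub>m 1) * H + G * (b \<cdot>\<^sub>m 1\<^sub>m 1) = (d \<cdot>\<^sub>m 1\<^sub>m 1) * G + H * (a \<cdot>\<^sub>m 1\<^sub>m 1))" for X
    by (auto simp: Ext1_cocycles_def simple_rep_simps)
  also have "\<dots> X \<longleftrightarrow> (\<exists>g h. X = hpair (g \<cdot>\<^sub>m 1\<^sub>m 1) (h \<cdot>\<^sub>m 1\<^sub>m 1) \<and> (c - a) * h = (d - b) * g)" for X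
    by (simp only: ex_carrier_mat_1_1 cocycle_iff)
  finally show ?thesis by blast
qed

lemma Ext1_coboundaries_simple_rep:
  "Ext1_coboundaries (simple_rep a b) (simple_rep c d) =
     {hpair (((c - a) * f) \<cdot>\<^sub>m 1\<^sub>m 1) (((d - b) * f) \<cdot>\<^sub>m 1\<^sub>m 1) | f. True}"
proof -
  have "X \<in> Ext1_coboundaries (simple_rep a b) (simple_rep c d) \<longleftrightarrow>
      (\<exists>F \<in> carrier_mat 1 1. X = hpair ((c \<cdot>\<^sub>m 1\<^sub>m 1) * F - F * (a \<cdot>\<^sub>m 1\<^sub>m 1))
         ((d \<cdot>\<^sub>m 1\<^sub>m 1) * F - F * (b \<cdot>\<^sub>m 1\<^sub>m 1)))" for X
    by (auto simp: Ext1_coboundaries_def simple_rep_simps)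
  also have "\<dots> X \<longleftrightarrow> (\<exists>f. X = hpair (((c - a) * f) \<cdot>\<^sub>m 1\<^sub>m 1) (((d - b) * f) \<cdot>\<^sub>m 1\<^sub>m 1))" for X
    by (simp only: ex_carrier_mat_1_1 smult_one_mat_mult smult_one_mat_diff)
      (simp add: algebra_simps)
  finally show ?thesis by blast
qed

lemma carrier_mat_1_2_eq_hpair:
  "carrier_mat 1 2 = {hpair (g \<cdot>\<^sub>m 1\<^sub>m 1) (h \<cdot>\<^sub>m 1\<^sub>m 1) | g h :: 'a::field. True}"
proof (intro equalityI subsetI)
  fix X :: "'a mat"
  assume "X \<in> carrier_mat 1 2"
  then have "X = hpair (X $$ (0, 0) \<cdot>\<^sub>m 1\<^sub>m 1) (X $$ (0, 1) \<cdot>\<^sub>m 1\<^sub>m 1)"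
    by (auto simp: hpair_def four_block_mat_def less_Suc_eq intro!: eq_matI)
  then show "X \<in> {hpair (g \<cdot>\<^sub>m 1\<^sub>m 1) (h \<cdot>\<^sub>m 1\<^sub>m 1) | g h. True}" by blast
qed (auto simp: hpair_def)

lemma dim_Ext1_simple_rep_self: "dim_Ext1 (simple_rep a b) (simple_rep a b) = 2"
proof -
  have "Ext1_cocycles (simple_rep a b) (simple_rep a b) = carrier_mat 1 2"
    unfolding Ext1_cocycles_simple_rep carrier_mat_1_2_eq_hpair by simp
  moreover have "Ext1_coboundaries (simple_rep a b) (simple_rep a b) = {0\<^sub>m 1 2}"
    by (auto simp: Ext1_coboundaries_simple_rep hpair_def intro!: eq_matI)
  ultimately show ?thesis
    unfolding dim_Ext1_def simple_rep_simps one_add_one by (simp only: mdim_carrier_mat mdim_zero)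
qed

lemma dim_Ext1_simple_rep_distinct:
  assumes "(a, b) \<noteq> (c, d)"
  shows "dim_Ext1 (simple_rep a b) (simple_rep c d) = 0"
proof -
  have "\<exists>f. g = (c - a) * f \<and> h = (d - b) * f" if "(c - a) * h = (d - b) * g" for g h
    using common_factor_if_cross_eq[OF _ that] assms by auto
  then have "Ext1_cocycles (simple_rep a b) (simple_rep c d) =
      Ext1_coboundaries (simple_rep a b) (simple_rep c d)"
    unfolding Ext1_cocycles_simple_rep Ext1_coboundaries_simple_rep by (fastforce simp: algebra_simps)
  then show ?thesis by (simp add: dim_Ext1_def)
qed

lemma dim_Ext1_brick:
  assumes X: "is_brick X" and Y: "is_brick Y"
  shows "dim_Ext1 X Y = (if X = Y then 2 else 0)"
proof -
  obtain a b c d where "X = simple_rep a b" "Y = simple_rep c d"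
    using brick_eq_simple_rep[OF X] brick_eq_simple_rep[OF Y] by metis
  then show ?thesis
    using dim_Ext1_simple_rep_self dim_Ext1_simple_rep_distinct[of a b c d] by auto
qed

lemma adjacency_brick_set:
  assumes xs: "brick_set xs"
  shows "adjacency xs = 2 \<cdot>\<^sub>m 1\<^sub>m (length xs)"
proof (rule eq_matI)
  fix i j assume "i < dim_row (2 \<cdot>\<^sub>m 1\<^sub>m (length xs) :: complex mat)"
    "j < dim_col (2 \<cdot>\<^sub>m 1\<^sub>m (length xs) :: complex mat)"
  then have ij: "i < length xs" "j < length xs" by auto
  have "xs ! i \<noteq> xs ! j" if "i \<noteq> j"
  proof -
    have "dim_Hom (xs ! i) (xs ! j) = 0" "dim_Hom (xs ! j) (xs ! j) = 1"
      using xs ij that by (simp_all add: brick_set_def)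
    then show ?thesis by auto
  qed
  then show "adjacency xs $$ (i, j) = (2 \<cdot>\<^sub>m 1\<^sub>m (length xs)) $$ (i, j)"
    using xs ij by (auto simp: adjacency_def brick_set_def dim_Ext1_brick)
qed (simp_all add: adjacency_def)

theorem theorem7p4:
  shows "fpdim_REP TYPE('k::alg_closed_field) = 2"
proof -
  have radius: "spectral_radius (adjacency xs) = 2" if "brick_set xs" for xs :: "'k rep list"
    using that by (simp add: adjacency_brick_set spectral_radius_smult_one_mat brick_set_def)
  have "brick_set [simple_rep (0 :: 'k) 0]"
    using is_brick_simple_rep by (simp add: brick_set_def is_brick_def)
  then have "{xs :: 'k rep list. brick_set xs} \<noteq> {}" by blast
  moreover have "fpdim_REP TYPE('k) = (SUP xs \<in> {xs :: 'k rep list. brick_set xs}. ereal 2)"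
    unfolding fpdim_REP_def by (rule SUP_cong) (simp_all add: radius)
  ultimately show ?thesis by simp
qed

end
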